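(* Let $A,B\in\mathbb{C}^{n\times n}$ be nonzero matrices. If $\theta(A)+\theta(B)<\pi$, then $\det(I+BA)\neq0$.
   Context: For a nonzero $A\in\mathbb{C}^{n\times n}$, its singular angle $\theta(A)\in[0,\pi]$ is defined by $\cos\theta(A)=\inf\{\mathrm{Re}(x^*Ax)/(|x|\,|Ax|): 0\ne x\in\mathbb{C}^n,\ Ax\neq0\}$, where $|\cdot|$ is the Euclidean norm. *)

theory Defs
  imports "HOL-Analysis.Analysis"
begin

definition herm_inner :: "complex^'n \<Rightarrow> complex^'n \<Rightarrow> complex" where
  "herm_inner x y = (\<Sum>i\<in>UNIV. cnj (x $ i) * y $ i)"

definition singular_angle :: "complex^'n^'n \<Rightarrow> real" where
  "singular_angle A = arccos (Inf {Re (herm_inner x (A *v x)) / (norm x * norm (A *v x)) | x.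
      x \<noteq> 0 \<and> A *v x \<noteq> 0})"

end

theory Submission
  imports Defs
begin

text \<open>If det (I + B A) = 0, pick y \<noteq> 0 with B A y = -y and put x = A y. Testing the
  infimum for A at y and the infimum for B at x gives the quotients Re (y* x) / (|y| |x|) and
  -Re (x* y) / (|x| |y|), which are opposite; hence cos \<theta>(A) + cos \<theta>(B) \<le> 0, i.e.
  \<theta>(A) + \<theta>(B) \<ge> \<pi>.\<close>

definition singular_cos :: "complex^'n^'n \<Rightarrow> real" where
  "singular_cos A = Inf {Re (herm_inner x (A *v x)) / (norm x * norm (A *v x)) | x.
      x \<noteq> 0 \<and> A *v x \<noteq> 0}"

lemma singular_angle_eq_arccos: "singular_angle A = arccos (singular_cos A)"
  unfolding singular_angle_def singular_cos_def ..

lemma Re_herm_inner: "Re (herm_inner x y) = inner x y"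
  unfolding herm_inner_def inner_vec_def inner_complex_def
  by (simp add: Re_sum)

lemma inner_div_norms_bounds:
  fixes x y :: "'a::real_inner"
  shows "-1 \<le> inner x y / (norm x * norm y)" and "inner x y / (norm x * norm y) \<le> 1"
proof -
  have "\<bar>inner x y / (norm x * norm y)\<bar> \<le> 1"
  proof (cases "x = 0 \<or> y = 0")
    case False
    then have "norm x * norm y > 0" by simp
    then show ?thesis by (simp add: abs_divide Cauchy_Schwarz_ineq2)
  qed auto
  then show "-1 \<le> inner x y / (norm x * norm y)" and "inner x y / (norm x * norm y) \<le> 1"
    by (simp_all only: abs_le_iff) linarith+
qed

lemma singular_cos_set_eq:
  "{Re (herm_inner x (A *v x)) / (norm x * norm (A *v x)) | x. x \<noteq> 0 \<and> A *v x \<noteq> 0}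
    = (\<lambda>x. inner x (A *v x) / (norm x * norm (A *v x))) ` {x. x \<noteq> 0 \<and> A *v x \<noteq> 0}"
  by (auto simp: Re_herm_inner)

lemma singular_cos_le:
  assumes "x \<noteq> 0" "A *v x \<noteq> 0"
  shows "singular_cos A \<le> inner x (A *v x) / (norm x * norm (A *v x))"
proof -
  have "bdd_below ((\<lambda>x. inner x (A *v x) / (norm x * norm (A *v x))) ` {x. x \<noteq> 0 \<and> A *v x \<noteq> 0})"
    using inner_div_norms_bounds(1) by (intro bdd_belowI2)
  then show ?thesis
    unfolding singular_cos_def singular_cos_set_eq using assms by (intro cInf_lower) auto
qed

lemma singular_cos_bounds:
  fixes A :: "complex^'n^'n"
  assumes "A \<noteq> 0"
  shows "-1 \<le> singular_cos A" "singular_cos A \<le> 1"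
proof -
  obtain x where Ax: "A *v x \<noteq> 0"
    using assms matrix_eq[of A 0] by auto
  then have x: "x \<noteq> 0" by auto
  show "singular_cos A \<le> 1"
    using singular_cos_le[OF x Ax] inner_div_norms_bounds(2) by (rule order_trans)
  show "-1 \<le> singular_cos A"
    unfolding singular_cos_def singular_cos_set_eq using x Ax inner_div_norms_bounds(1)
    by (intro cInf_greatest) auto
qed

lemma singular_cos_add_nonpos:
  fixes A B :: "complex^'n^'n"
  assumes "\<not> invertible (mat 1 + B ** A)"
  shows "singular_cos A + singular_cos B \<le> 0"
proof -
  obtain y where y: "y \<noteq> 0" and ker: "(mat 1 + B ** A) *v y = 0"
    using assms unfolding invertible_left_inverse matrix_left_invertible_ker by blast
  define x where "x = A *v y"
  have Bx: "B *v x = - y"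
    using ker unfolding x_def
    by (simp add: matrix_vector_mult_add_rdistrib matrix_vector_mul_assoc eq_neg_iff_add_eq_0 add.commute)
  with y have x: "x \<noteq> 0" and "B *v x \<noteq> 0" by auto
  have "singular_cos A \<le> inner y x / (norm y * norm x)"
    using singular_cos_le[of y A] x y unfolding x_def by simp
  moreover have "singular_cos B \<le> - (inner y x / (norm y * norm x))"
    using singular_cos_le[of x B] Bx x y by (simp add: inner_commute mult.commute)
  ultimately show ?thesis by linarith
qed

lemma pi_le_arccos_add:
  fixes a b :: real
  assumes "-1 \<le> a" "a \<le> 1" "-1 \<le> b" "b \<le> 1" and "a + b \<le> 0"
  shows "pi \<le> arccos a + arccos b"
proof -
  have "pi - arccos a = arccos (- a)"
    using assms by (simp add: arccos_minus)
  also have "\<dots> \<le> arccos b"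
    using assms by (intro arccos_le_arccos) auto
  finally show ?thesis by simp
qed

theorem theorem2:
  fixes A B :: "complex^'n^'n"
  assumes "A \<noteq> 0" and "B \<noteq> 0"
    and "singular_angle A + singular_angle B < pi"
  shows "det (mat 1 + B ** A) \<noteq> 0"
proof
  assume "det (mat 1 + B ** A) = 0"
  then have "singular_cos A + singular_cos B \<le> 0"
    by (intro singular_cos_add_nonpos) (simp add: invertible_det_nz)
  then have "pi \<le> singular_angle A + singular_angle B"
    unfolding singular_angle_eq_arccos
    using singular_cos_bounds[OF assms(1)] singular_cos_bounds[OF assms(2)]
    by (intro pi_le_arccos_add)
  with assms(3) show False by simp
qed

end
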